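(* Let $X$ be a real Hilbert space, let $\alpha\in\left]0,1\right[$, $\beta>0$, $\delta\in\mathbb{R}\setminus\{0\}$, let $\{i,j\}=\{1,2\}$, and let $R_1,R_2\colon X\to X$. Suppose $\tfrac1\delta R_i$ is $\alpha$-averaged and $R_j$ is $\tfrac1\beta$-cocoercive. Set $\bar\alpha=\tfrac1{2-\alpha}$. Then $\bar\alpha\in\left]0,1\right[$ and there exists a nonexpansive $N\colon X\to X$ such that $R_2R_1=\beta\delta\big((1-\bar\alpha)\mathrm{Id}+\bar\alpha N\big)$.
   Context: For $\alpha\in\left]0,1\right[$, $T\colon X\to X$ is $\alpha$-averaged if $T=(1-\alpha)\mathrm{Id}+\alpha N$ for some nonexpansive ($1$-Lipschitz) $N\colon X\to X$. For $\beta>0$, $T$ is $\tfrac1\beta$-cocoercive if $T=\tfrac\beta2(\mathrm{Id}+N)$ for some nonexpansive $N\colon X\to X$. *)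

theory Defs
  imports "HOL-Analysis.Analysis"
begin

definition nonexpansive :: "('a::real_normed_vector \<Rightarrow> 'a) \<Rightarrow> bool" where
  "nonexpansive N \<longleftrightarrow> (\<forall>x y. norm (N x - N y) \<le> norm (x - y))"

definition averaged :: "real \<Rightarrow> ('a::real_normed_vector \<Rightarrow> 'a) \<Rightarrow> bool" where
  "averaged \<alpha> T \<longleftrightarrow> 0 < \<alpha> \<and> \<alpha> < 1 \<and>
     (\<exists>N. nonexpansive N \<and> T = (\<lambda>x. (1 - \<alpha>) *\<^sub>R x + \<alpha> *\<^sub>R N x))"

text \<open>T is (1/beta)-cocoercive: T = (beta/2)(Id + N) with N nonexpansive (beta > 0).\<close>
definition cocoercive_inv :: "real \<Rightarrow> ('a::real_normed_vector \<Rightarrow> 'a) \<Rightarrow> bool" where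
  "cocoercive_inv \<beta> T \<longleftrightarrow> 0 < \<beta> \<and>
     (\<exists>N. nonexpansive N \<and> T = (\<lambda>x. (\<beta> / 2) *\<^sub>R (x + N x)))"

end

theory Submission
  imports Defs
begin

text \<open>Write \<open>\<epsilon>\<^sub>a = (1 - a) / a\<close>. In a real inner product space, \<open>T\<close> is \<open>a\<close>-averaged iff
  \<open>\<parallel>Tx - Ty\<parallel>\<^sup>2 + \<epsilon>\<^sub>a \<parallel>(x - y) - (Tx - Ty)\<parallel>\<^sup>2 \<le> \<parallel>x - y\<parallel>\<^sup>2\<close>. Chaining this inequality through a
  composition and bounding \<open>\<epsilon>\<^sub>2\<parallel>u - p\<parallel>\<^sup>2 + \<epsilon>\<^sub>1\<parallel>p - w\<parallel>\<^sup>2\<close> from below by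
  \<open>\<epsilon>\<^sub>1\<epsilon>\<^sub>2/(\<epsilon>\<^sub>1+\<epsilon>\<^sub>2) \<parallel>u - w\<parallel>\<^sup>2\<close> shows that a composition of averaged maps is averaged, with
  \<open>\<epsilon> = \<epsilon>\<^sub>1\<epsilon>\<^sub>2/(\<epsilon>\<^sub>1+\<epsilon>\<^sub>2)\<close>. A \<open>1/\<beta>\<close>-cocoercive map is \<open>\<beta>\<close> times a \<open>1/2\<close>-averaged one, and
  \<open>\<epsilon>\<^sub>1 = (1 - \<alpha>)/\<alpha>\<close>, \<open>\<epsilon>\<^sub>2 = 1\<close> give \<open>\<epsilon> = 1 - \<alpha>\<close>, i.e. the constant \<open>1/(2 - \<alpha>)\<close>. The scalars \<open>\<beta>\<close> and \<open>\<delta>\<close>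
  are moved outside the composition by conjugating one factor with a dilation.\<close>

lemma norm_convex_combination_power2:
  fixes u d :: "'a::real_inner"
  shows "(norm ((1 - a) *\<^sub>R u + a *\<^sub>R d))\<^sup>2 + a * (1 - a) * (norm (u - d))\<^sup>2
    = (1 - a) * (norm u)\<^sup>2 + a * (norm d)\<^sup>2"
  unfolding power2_norm_eq_inner
  by (simp add: inner_simps inner_commute algebra_simps power2_eq_square)

lemma norm_add_power2_le_weighted:
  fixes u v :: "'a::real_inner"
  assumes "0 < e1" "0 < e2"
  shows "e1 * e2 / (e1 + e2) * (norm (u + v))\<^sup>2 \<le> e2 * (norm u)\<^sup>2 + e1 * (norm v)\<^sup>2"
proof -
  have "(e1 + e2) * (e2 * (norm u)\<^sup>2 + e1 * (norm v)\<^sup>2) - e1 * e2 * (norm (u + v))\<^sup>2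
      = (norm (e2 *\<^sub>R u - e1 *\<^sub>R v))\<^sup>2"
    unfolding power2_norm_eq_inner
    by (simp add: inner_simps inner_commute algebra_simps power2_eq_square)
  then have "e1 * e2 * (norm (u + v))\<^sup>2 \<le> (e1 + e2) * (e2 * (norm u)\<^sup>2 + e1 * (norm v)\<^sup>2)"
    by (metis diff_ge_0_iff_ge zero_le_power2)
  then show ?thesis
    using assms by (simp add: pos_divide_le_eq mult.commute)
qed

lemma averaged_map_norm_identity:
  fixes N :: "'a::real_inner \<Rightarrow> 'a"
  assumes "a \<noteq> 0" and T: "T = (\<lambda>x. (1 - a) *\<^sub>R x + a *\<^sub>R N x)"
  shows "(norm (T x - T y))\<^sup>2 + (1 - a) / a * (norm ((x - y) - (T x - T y)))\<^sup>2
    = (1 - a) * (norm (x - y))\<^sup>2 + a * (norm (N x - N y))\<^sup>2"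
proof -
  let ?u = "x - y" and ?d = "N x - N y"
  have "T x - T y = (1 - a) *\<^sub>R ?u + a *\<^sub>R ?d"
    by (simp add: T algebra_simps)
  moreover have "?u - ((1 - a) *\<^sub>R ?u + a *\<^sub>R ?d) = a *\<^sub>R (?u - ?d)"
    by (simp add: algebra_simps)
  moreover have "(1 - a) / a * (norm (a *\<^sub>R (?u - ?d)))\<^sup>2 = a * (1 - a) * (norm (?u - ?d))\<^sup>2"
    using assms by (simp add: power_mult_distrib power2_abs) (simp add: power2_eq_square)
  ultimately show ?thesis
    using norm_convex_combination_power2[of a ?u ?d] by simp
qed

lemma averaged_iff_norm_ineq:
  fixes T :: "'a::real_inner \<Rightarrow> 'a"
  assumes "0 < a" "a < 1"
  shows "averaged a T \<longleftrightarrow>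
    (\<forall>x y. (norm (T x - T y))\<^sup>2 + (1 - a) / a * (norm ((x - y) - (T x - T y)))\<^sup>2
      \<le> (norm (x - y))\<^sup>2)"
    (is "_ \<longleftrightarrow> (\<forall>x y. ?ineq x y)")
proof
  assume "averaged a T"
  then obtain N where N: "nonexpansive N" and T: "T = (\<lambda>x. (1 - a) *\<^sub>R x + a *\<^sub>R N x)"
    unfolding averaged_def by blast
  show "\<forall>x y. ?ineq x y"
  proof (intro allI)
    fix x y
    have "(norm (N x - N y))\<^sup>2 \<le> (norm (x - y))\<^sup>2"
      using N unfolding nonexpansive_def by (simp add: power_mono)
    then have "a * (norm (N x - N y))\<^sup>2 \<le> a * (norm (x - y))\<^sup>2"
      using assms(1) by (simp add: mult_left_mono)
    then have "(1 - a) * (norm (x - y))\<^sup>2 + a * (norm (N x - N y))\<^sup>2 \<le> (norm (x - y))\<^sup>2"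
      by (simp add: algebra_simps)
    then show "?ineq x y"
      using averaged_map_norm_identity[OF _ T, of x y] assms(1) by linarith
  qed
next
  assume ineq: "\<forall>x y. ?ineq x y"
  define N where "N x = (1 / a) *\<^sub>R (T x - (1 - a) *\<^sub>R x)" for x
  have T: "T = (\<lambda>x. (1 - a) *\<^sub>R x + a *\<^sub>R N x)"
    using assms by (simp add: N_def fun_eq_iff)
  have "nonexpansive N"
    unfolding nonexpansive_def
  proof (intro allI)
    fix x y
    have "(1 - a) * (norm (x - y))\<^sup>2 + a * (norm (N x - N y))\<^sup>2 \<le> (norm (x - y))\<^sup>2"
      using ineq[rule_format, of x y] averaged_map_norm_identity[OF _ T, of x y] assms(1)
      by linarith
    then have "(norm (N x - N y))\<^sup>2 \<le> (norm (x - y))\<^sup>2"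
      using assms by (simp add: algebra_simps)
    then show "norm (N x - N y) \<le> norm (x - y)"
      by (rule power2_le_imp_le) simp
  qed
  with assms show "averaged a T"
    unfolding averaged_def T by blast
qed

lemma averaged_comp_constant:
  fixes a1 a2 :: real
  assumes a1: "0 < a1" "a1 < 1" and a2: "0 < a2" "a2 < 1"
  defines "a \<equiv> (a1 + a2 - 2 * a1 * a2) / (1 - a1 * a2)"
  shows "0 < a" "a < 1"
    and "(1 - a) / a = ((1 - a1) / a1) * ((1 - a2) / a2) / ((1 - a1) / a1 + (1 - a2) / a2)"
proof -
  have "0 < a1 * (1 - a2)" "0 < a2 * (1 - a1)" "0 < (1 - a1) * (1 - a2)"
    using a1 a2 by simp_all
  then have num: "0 < a1 + a2 - 2 * a1 * a2" and den: "a1 + a2 - 2 * a1 * a2 < 1 - a1 * a2"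
    by (simp_all add: algebra_simps)
  then show "0 < a" "a < 1"
    unfolding a_def by simp_all
  have frac: "(1 - n / d) / (n / d) = (d - n) / n" if "n \<noteq> 0" "d \<noteq> 0" for n d :: real
    using that by (simp add: field_simps)
  have "(1 - a) / a = ((1 - a1 * a2) - (a1 + a2 - 2 * a1 * a2)) / (a1 + a2 - 2 * a1 * a2)"
    unfolding a_def using num den by (intro frac) simp_all
  also have "\<dots> = (1 - a1) * (1 - a2) / (a1 + a2 - 2 * a1 * a2)"
    by (simp add: algebra_simps)
  also have "\<dots> = ((1 - a1) * (1 - a2) / (a1 * a2)) / ((a1 + a2 - 2 * a1 * a2) / (a1 * a2))"
    using a1 a2 by simp
  also have "\<dots> = ((1 - a1) / a1) * ((1 - a2) / a2) / ((1 - a1) / a1 + (1 - a2) / a2)"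
    using a1 a2 by (simp add: add_divide_distrib diff_divide_distrib algebra_simps)
  finally show "(1 - a) / a = ((1 - a1) / a1) * ((1 - a2) / a2) / ((1 - a1) / a1 + (1 - a2) / a2)" .
qed

lemma averaged_comp:
  fixes T1 T2 :: "'a::real_inner \<Rightarrow> 'a"
  assumes T1: "averaged a1 T1" and T2: "averaged a2 T2"
  shows "averaged ((a1 + a2 - 2 * a1 * a2) / (1 - a1 * a2)) (T1 \<circ> T2)"
proof -
  define a where "a = (a1 + a2 - 2 * a1 * a2) / (1 - a1 * a2)"
  define e1 where "e1 = (1 - a1) / a1"
  define e2 where "e2 = (1 - a2) / a2"
  have a1: "0 < a1" "a1 < 1" and a2: "0 < a2" "a2 < 1"
    using T1 T2 unfolding averaged_def by auto
  note a = averaged_comp_constant[OF a1 a2, folded a_def e1_def e2_def]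
  have e: "0 < e1" "0 < e2"
    using a1 a2 by (auto simp: e1_def e2_def)
  have ineq1: "(norm (T1 p - T1 q))\<^sup>2 + e1 * (norm ((p - q) - (T1 p - T1 q)))\<^sup>2 \<le> (norm (p - q))\<^sup>2"
    for p q
    using T1 a1 unfolding e1_def by (simp add: averaged_iff_norm_ineq)
  have ineq2: "(norm (T2 x - T2 y))\<^sup>2 + e2 * (norm ((x - y) - (T2 x - T2 y)))\<^sup>2 \<le> (norm (x - y))\<^sup>2"
    for x y
    using T2 a2 unfolding e2_def by (simp add: averaged_iff_norm_ineq)
  have "(norm ((T1 \<circ> T2) x - (T1 \<circ> T2) y))\<^sup>2
      + (1 - a) / a * (norm ((x - y) - ((T1 \<circ> T2) x - (T1 \<circ> T2) y)))\<^sup>2 \<le> (norm (x - y))\<^sup>2"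
    for x y
  proof -
    let ?u = "x - y" and ?p = "T2 x - T2 y" and ?w = "T1 (T2 x) - T1 (T2 y)"
    have "(?u - ?p) + (?p - ?w) = ?u - ?w"
      by simp
    note norm_add_power2_le_weighted[OF e, of "?u - ?p" "?p - ?w", unfolded this]
    then show ?thesis
      using ineq1[of "T2 x" "T2 y"] ineq2[of x y] by (simp add: a(3))
  qed
  then show ?thesis
    using a(1,2) by (simp add: a_def averaged_iff_norm_ineq)
qed

lemma averaged_comp_half:
  fixes T F :: "'a::real_inner \<Rightarrow> 'a"
  assumes "averaged a T" "averaged (1 / 2) F"
  shows "averaged (1 / (2 - a)) (T \<circ> F)" "averaged (1 / (2 - a)) (F \<circ> T)"
proof -
  have "a < 1"
    using assms(1) unfolding averaged_def by simp
  then have "(a + 1 / 2 - 2 * a * (1 / 2)) / (1 - a * (1 / 2)) = 1 / (2 - a)"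
    "(1 / 2 + a - 2 * (1 / 2) * a) / (1 - (1 / 2) * a) = 1 / (2 - a)"
    by (simp_all add: field_simps)
  then show "averaged (1 / (2 - a)) (T \<circ> F)" "averaged (1 / (2 - a)) (F \<circ> T)"
    using averaged_comp[OF assms] averaged_comp[OF assms(2,1)] by simp_all
qed

lemma nonexpansive_conj_scaleR:
  fixes N :: "'a::real_normed_vector \<Rightarrow> 'a"
  assumes "nonexpansive N" "c \<noteq> 0"
  shows "nonexpansive (\<lambda>x. (1 / c) *\<^sub>R N (c *\<^sub>R x))"
  unfolding nonexpansive_def
proof (intro allI)
  fix x y :: 'a
  have "norm ((1 / c) *\<^sub>R N (c *\<^sub>R x) - (1 / c) *\<^sub>R N (c *\<^sub>R y))
      = norm (N (c *\<^sub>R x) - N (c *\<^sub>R y)) / \<bar>c\<bar>"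
    by (simp flip: scaleR_diff_right)
  also have "\<dots> \<le> norm (c *\<^sub>R x - c *\<^sub>R y) / \<bar>c\<bar>"
    using assms(1) unfolding nonexpansive_def by (simp add: divide_right_mono)
  also have "\<dots> = norm (x - y)"
    using assms(2) by (simp flip: scaleR_diff_right)
  finally show "norm ((1 / c) *\<^sub>R N (c *\<^sub>R x) - (1 / c) *\<^sub>R N (c *\<^sub>R y)) \<le> norm (x - y)" .
qed

lemma averaged_conj_scaleR:
  fixes T :: "'a::real_normed_vector \<Rightarrow> 'a"
  assumes "averaged a T" "c \<noteq> 0"
  shows "averaged a (\<lambda>x. (1 / c) *\<^sub>R T (c *\<^sub>R x))"
proof -
  obtain N where N: "nonexpansive N" and T: "T = (\<lambda>x. (1 - a) *\<^sub>R x + a *\<^sub>R N x)"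
    using assms(1) unfolding averaged_def by blast
  have "(\<lambda>x. (1 / c) *\<^sub>R T (c *\<^sub>R x)) = (\<lambda>x. (1 - a) *\<^sub>R x + a *\<^sub>R ((1 / c) *\<^sub>R N (c *\<^sub>R x)))"
    using assms(2) by (simp add: T fun_eq_iff scaleR_add_right)
  then show ?thesis
    using assms(1) nonexpansive_conj_scaleR[OF N assms(2)] unfolding averaged_def by blast
qed

lemma cocoercive_inv_imp_averaged_half:
  assumes "cocoercive_inv \<beta> R"
  shows "averaged (1 / 2) (\<lambda>x. (1 / \<beta>) *\<^sub>R R x)"
proof -
  obtain N where "nonexpansive N" and R: "R = (\<lambda>x. (\<beta> / 2) *\<^sub>R (x + N x))" and "0 < \<beta>"
    using assms unfolding cocoercive_inv_def by blast
  moreover have "(\<lambda>x. (1 / \<beta>) *\<^sub>R R x) = (\<lambda>x. (1 - 1 / 2) *\<^sub>R x + (1 / 2) *\<^sub>R N x)"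
    using \<open>0 < \<beta>\<close> by (simp add: R fun_eq_iff scaleR_add_right)
  ultimately show ?thesis
    unfolding averaged_def by auto
qed

theorem mainTheorem8:
  fixes R1 R2 :: "'a::{real_inner, complete_space} \<Rightarrow> 'a"
    and \<alpha> \<beta> \<delta> :: real
  assumes "0 < \<alpha>" and "\<alpha> < 1" and "0 < \<beta>" and "\<delta> \<noteq> 0"
    and "(averaged \<alpha> (\<lambda>x. (1 / \<delta>) *\<^sub>R R1 x) \<and> cocoercive_inv \<beta> R2)
       \<or> (averaged \<alpha> (\<lambda>x. (1 / \<delta>) *\<^sub>R R2 x) \<and> cocoercive_inv \<beta> R1)"
  shows "0 < 1 / (2 - \<alpha>) \<and> 1 / (2 - \<alpha>) < 1 \<and>
    (\<exists>N. nonexpansive N \<and>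
       R2 \<circ> R1 = (\<lambda>x. (\<beta> * \<delta>) *\<^sub>R ((1 - 1 / (2 - \<alpha>)) *\<^sub>R x + (1 / (2 - \<alpha>)) *\<^sub>R N x)))"
proof -
  have "\<beta> \<noteq> 0"
    using assms(3) by simp
  have "\<exists>S. averaged (1 / (2 - \<alpha>)) S \<and> R2 \<circ> R1 = (\<lambda>x. (\<beta> * \<delta>) *\<^sub>R S x)"
    using assms(5)
  proof (elim disjE conjE)
    assume A: "averaged \<alpha> (\<lambda>x. (1 / \<delta>) *\<^sub>R R1 x)" and "cocoercive_inv \<beta> R2"
    let ?F = "\<lambda>y. (1 / \<delta>) *\<^sub>R ((1 / \<beta>) *\<^sub>R R2 (\<delta> *\<^sub>R y))"
    have "averaged (1 / 2) ?F"
      using averaged_conj_scaleR[OF cocoercive_inv_imp_averaged_half assms(4)] \<open>cocoercive_inv \<beta> R2\<close> .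
    moreover have "R2 \<circ> R1 = (\<lambda>x. (\<beta> * \<delta>) *\<^sub>R (?F \<circ> (\<lambda>x. (1 / \<delta>) *\<^sub>R R1 x)) x)"
      using assms(4) \<open>\<beta> \<noteq> 0\<close> by (simp add: fun_eq_iff)
    ultimately show ?thesis
      using averaged_comp_half(2)[OF A] by blast
  next
    assume A: "averaged \<alpha> (\<lambda>x. (1 / \<delta>) *\<^sub>R R2 x)" and "cocoercive_inv \<beta> R1"
    let ?T = "\<lambda>y. (1 / \<beta>) *\<^sub>R ((1 / \<delta>) *\<^sub>R R2 (\<beta> *\<^sub>R y))"
    have "averaged \<alpha> ?T"
      using averaged_conj_scaleR[OF A \<open>\<beta> \<noteq> 0\<close>] .
    moreover have "R2 \<circ> R1 = (\<lambda>x. (\<beta> * \<delta>) *\<^sub>R (?T \<circ> (\<lambda>x. (1 / \<beta>) *\<^sub>R R1 x)) x)"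
      using assms(4) \<open>\<beta> \<noteq> 0\<close> by (simp add: fun_eq_iff)
    ultimately show ?thesis
      using averaged_comp_half(1) cocoercive_inv_imp_averaged_half[OF \<open>cocoercive_inv \<beta> R1\<close>] by blast
  qed
  then show ?thesis
    unfolding averaged_def by auto
qed

end
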